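(* Let $U_q(H_1,H_2,X^\pm)$ be the Hopf algebra described in the context, and put $E=K_2X^+$, $F=K_2^{-1}X^-$. Then $U_q(H_1,H_2,X^\pm)$ is quasitriangular with universal $R$-matrix $$\mathcal{R}=e^{-i\frac{\pi}{4}H_2\otimes H_2}\,q^{\frac14\left(H_1\otimes H_1-H_2\otimes H_2\right)}\left(1\otimes 1+(1-q^2)\,E\otimes F\right),$$ i.e. $\mathcal R$ is invertible, $\tau\circ\Delta(a)=\mathcal R\,\Delta(a)\,\mathcal R^{-1}$ for all $a$ (with $\tau$ the flip), $(\Delta\otimes\mathrm{id})\mathcal R=\mathcal R_{13}\mathcal R_{23}$ and $(\mathrm{id}\otimes\Delta)\mathcal R=\mathcal R_{13}\mathcal R_{12}$.
   Context: $q$ is a deformation parameter and exponentials of the generators are understood formally (e.g. as formal power series). Set $K_1=q^{H_1/2}$ and $K_2=e^{i\frac{\pi}{2}H_2}q^{H_2/2}$. $U_q(H_1,H_2,X^\pm)$ is the Hopf algebra generated by $H_1,H_2,X^+,X^-$ with relations $[H_1,H_2]=0$, $[H_1,X^\pm]=\pm2X^\pm$, $[H_2,X^\pm]=\mp 2X^\pm$, $[X^+,X^-]=\frac{K_1K_2-K_1^{-1}K_2^{-1}}{q-q^{-1}}$, $(X^\pm)^2=0$; coproduct $\Delta H_i=H_i\otimes1+1\otimes H_i$, $\Delta X^+=X^+\otimes K_1+K_2^{-1}\otimes X^+$, $\Delta X^-=X^-\otimes K_2+K_1^{-1}\otimes X^-$ (so $\Delta K_i=K_i\otimes K_i$); counit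 $\varepsilon(H_i)=\varepsilon(X^\pm)=0$; antipode $S(H_i)=-H_i$, $S(X^+)=-qK_1^{-1}K_2X^+$, $S(X^-)=qK_1K_2^{-1}X^-$. For $\mathcal R=\sum_i a_i\otimes b_i$, $\mathcal R_{12}=\sum a_i\otimes b_i\otimes1$, $\mathcal R_{13}=\sum a_i\otimes 1\otimes b_i$, $\mathcal R_{23}=\sum 1\otimes a_i\otimes b_i$. *)

theory Defs
  imports Complex_Main
begin

text \<open>
The deformation parameter is q = exp hb (hb a complex number, so that
q^z := exp (hb * z) makes sense for complex z).

An element of the completed n-fold tensor power is written in the normal form
  sum over monomial tuples ms = (m_1,...,m_n) of  f_ms(H^(1),...,H^(n)) (m_1 (x) ... (x) m_n),
where m_i ranges over the PBW monomials 1, X+, X-, X+X- (a basis over the Cartan part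
since (X+-)^2 = 0), and f_ms is an arbitrary complex function of the Cartan
eigenvalues H^(i) = (H1,H2) of the i-th tensor factor (Cartan part written on the left).
Such an element is represented by its coefficient function
  F :: mon list => (complex*complex) list => complex,  F ms h = f_ms(h),
vanishing on arguments whose length differs from n.
\<close>

datatype mon = m0 | mP | mM | mPM   \<comment> \<open>1, X+, X-, X+X-\<close>

type_synonym cw = "complex \<times> complex"
type_synonym tens = "mon list \<Rightarrow> cw list \<Rightarrow> complex"

definition mons :: "nat \<Rightarrow> mon list set" where
  "mons n = set (List.n_lists n [m0, mP, mM, mPM])"

definition padd :: "cw \<Rightarrow> cw \<Rightarrow> cw" where
  "padd a b = (fst a + fst b, snd a + snd b)"

definition psub :: "cw \<Rightarrow> cw \<Rightarrow> cw" where
  "psub a b = (fst a - fst b, snd a - snd b)"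

text \<open>weight of a monomial: [H1,X+-] = +-2 X+-, [H2,X+-] = -+2 X+-\<close>
fun wt :: "mon \<Rightarrow> cw" where
  "wt m0 = (0, 0)"
| "wt mP = (2, -2)"
| "wt mM = (-2, 2)"
| "wt mPM = (0, 0)"

text \<open>K1 = q^(H1/2), K2 = e^(i pi H2/2) q^(H2/2), evaluated at eigenvalues h = (h1,h2)\<close>
definition K1 :: "complex \<Rightarrow> cw \<Rightarrow> complex" where
  "K1 hb h = exp (hb * fst h / 2)"

definition K2 :: "complex \<Rightarrow> cw \<Rightarrow> complex" where
  "K2 hb h = exp (\<i> * of_real pi * snd h / 2) * exp (hb * snd h / 2)"

text \<open>[X+,X-] = (K1K2 - K1^-1 K2^-1)/(q - q^-1)\<close>
definition cX :: "complex \<Rightarrow> cw \<Rightarrow> complex" where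
  "cX hb h = (K1 hb h * K2 hb h - inverse (K1 hb h * K2 hb h)) / (exp hb - inverse (exp hb))"

text \<open>Product of two monomials in one tensor factor, as a list of
  (monomial, Cartan coefficient standing on its left).  Uses X- X+ = X+ X- - [X+,X-],
  (X+-)^2 = 0 and g(H) X+- = X+- g(H +- alpha).\<close>
fun mprod :: "complex \<Rightarrow> mon \<Rightarrow> mon \<Rightarrow> (mon \<times> (cw \<Rightarrow> complex)) list" where
  "mprod hb m0 m = [(m, \<lambda>h. 1)]"
| "mprod hb mP m0 = [(mP, \<lambda>h. 1)]"
| "mprod hb mP mP = []"
| "mprod hb mP mM = [(mPM, \<lambda>h. 1)]"
| "mprod hb mP mPM = []"
| "mprod hb mM m0 = [(mM, \<lambda>h. 1)]"
| "mprod hb mM mP = [(mPM, \<lambda>h. 1), (m0, \<lambda>h. - cX hb h)]"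
| "mprod hb mM mM = []"
| "mprod hb mM mPM = [(mM, \<lambda>h. - cX hb h)]"
| "mprod hb mPM m0 = [(mPM, \<lambda>h. 1)]"
| "mprod hb mPM mP = [(mP, \<lambda>h. - cX hb (psub h (wt mP)))]"
| "mprod hb mPM mM = []"
| "mprod hb mPM mPM = [(mPM, \<lambda>h. - cX hb (psub h (wt mP)))]"

definition sc :: "complex \<Rightarrow> mon \<Rightarrow> mon \<Rightarrow> mon \<Rightarrow> cw \<Rightarrow> complex" where
  "sc hb m m' m'' h = sum_list (map (\<lambda>(x, \<phi>). if x = m'' then \<phi> h else 0) (mprod hb m m'))"

definition restr :: "nat \<Rightarrow> tens \<Rightarrow> tens" where
  "restr n F = (\<lambda>ms h. if length ms = n \<and> length h = n then F ms h else 0)"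

definition Tens :: "nat \<Rightarrow> tens set" where
  "Tens n = {F. restr n F = F}"

definition tadd :: "tens \<Rightarrow> tens \<Rightarrow> tens" where
  "tadd F G = (\<lambda>ms h. F ms h + G ms h)"

definition tscale :: "complex \<Rightarrow> tens \<Rightarrow> tens" where
  "tscale c F = (\<lambda>ms h. c * F ms h)"

text \<open>product: (f_a(H) a)(g_b(H) b) = f_a(H) g_b(H - wt a) (a b)\<close>
definition tmul :: "complex \<Rightarrow> nat \<Rightarrow> tens \<Rightarrow> tens \<Rightarrow> tens" where
  "tmul hb n F G = restr n (\<lambda>ms h.
     \<Sum>a\<in>mons n. \<Sum>b\<in>mons n.
       F a h * G b (map2 (\<lambda>hi ai. psub hi (wt ai)) h a) *
       (\<Prod>i<n. sc hb (a ! i) (b ! i) (ms ! i) (h ! i)))"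

definition tone :: "nat \<Rightarrow> tens" where
  "tone n = restr n (\<lambda>ms h. if ms = replicate n m0 then 1 else 0)"

definition cart :: "nat \<Rightarrow> (cw list \<Rightarrow> complex) \<Rightarrow> tens" where
  "cart n \<phi> = restr n (\<lambda>ms h. if ms = replicate n m0 then \<phi> h else 0)"

definition mono :: "nat \<Rightarrow> mon list \<Rightarrow> tens" where
  "mono n xs = restr n (\<lambda>ms h. if ms = xs then 1 else 0)"

definition ttensor :: "nat \<Rightarrow> nat \<Rightarrow> tens \<Rightarrow> tens \<Rightarrow> tens" where
  "ttensor k l F G = restr (k + l)
     (\<lambda>ms h. F (take k ms) (take k h) * G (drop k ms) (drop k h))"

definition tflip :: "tens \<Rightarrow> tens" where
  "tflip F = restr 2 (\<lambda>ms h. F [ms ! 1, ms ! 0] [h ! 1, h ! 0])"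

definition leg12 :: "tens \<Rightarrow> tens" where
  "leg12 F = ttensor 2 1 F (tone 1)"

definition leg23 :: "tens \<Rightarrow> tens" where
  "leg23 F = ttensor 1 2 (tone 1) F"

definition leg13 :: "tens \<Rightarrow> tens" where
  "leg13 F = restr 3 (\<lambda>ms h. if ms ! 1 = m0 then F [ms ! 0, ms ! 2] [h ! 0, h ! 2] else 0)"

text \<open>coproduct of the monomials:
  Delta X+ = X+ (x) K1 + K2^-1 (x) X+,  Delta X- = X- (x) K2 + K1^-1 (x) X-,
  Delta (X+X-) = Delta X+ Delta X-\<close>
definition DP :: "complex \<Rightarrow> tens" where
  "DP hb = tadd (tmul hb 2 (cart 2 (\<lambda>h. K1 hb (h ! 1))) (mono 2 [mP, m0]))
                (tmul hb 2 (cart 2 (\<lambda>h. inverse (K2 hb (h ! 0)))) (mono 2 [m0, mP]))"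

definition DM :: "complex \<Rightarrow> tens" where
  "DM hb = tadd (tmul hb 2 (cart 2 (\<lambda>h. K2 hb (h ! 1))) (mono 2 [mM, m0]))
                (tmul hb 2 (cart 2 (\<lambda>h. inverse (K1 hb (h ! 0)))) (mono 2 [m0, mM]))"

fun Dmon :: "complex \<Rightarrow> mon \<Rightarrow> tens" where
  "Dmon hb m0 = tone 2"
| "Dmon hb mP = DP hb"
| "Dmon hb mM = DM hb"
| "Dmon hb mPM = tmul hb 2 (DP hb) (DM hb)"

text \<open>Apply Delta to the k-th tensor factor (0-based) of an n-tensor:
  Delta(f(H) m) = f(H (x) 1 + 1 (x) H) Delta(m).\<close>
definition Dat :: "complex \<Rightarrow> nat \<Rightarrow> nat \<Rightarrow> tens \<Rightarrow> tens" where
  "Dat hb n k F = restr (n + 1) (\<lambda>ms h.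
     \<Sum>m\<in>{m0, mP, mM, mPM}.
       F (take k ms @ m # drop (k + 2) ms) (take k h @ padd (h ! k) (h ! (k + 1)) # drop (k + 2) h) *
       Dmon hb m [ms ! k, ms ! (k + 1)] [h ! k, h ! (k + 1)])"

definition Delta :: "complex \<Rightarrow> tens \<Rightarrow> tens" where
  "Delta hb F = Dat hb 1 0 F"

definition Egen :: "complex \<Rightarrow> tens" where
  "Egen hb = tmul hb 1 (cart 1 (\<lambda>h. K2 hb (h ! 0))) (mono 1 [mP])"

definition Fgen :: "complex \<Rightarrow> tens" where
  "Fgen hb = tmul hb 1 (cart 1 (\<lambda>h. inverse (K2 hb (h ! 0)))) (mono 1 [mM])"

definition Rmat :: "complex \<Rightarrow> tens" where
  "Rmat hb = tmul hb 2
     (tmul hb 2 (cart 2 (\<lambda>h. exp (- \<i> * of_real pi / 4 * (snd (h ! 0) * snd (h ! 1)))))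
                (cart 2 (\<lambda>h. exp (hb * ((fst (h ! 0) * fst (h ! 1) - snd (h ! 0) * snd (h ! 1)) / 4)))))
     (tadd (tone 2) (tscale (1 - exp hb ^ 2) (ttensor 1 1 (Egen hb) (Fgen hb))))"

end

theory Submission
  imports Defs
begin

text \<open>
Every tensor occurring in the statement is a finite sum of terms f(H) m, with m a tuple of
PBW monomials and f a function of the Cartan eigenvalues, and products, coproducts, flips and
legs of such sums are computed term by term from the one-factor multiplication table.
Writing C for the Cartan factor of R, we have R = C (1 + (1-q^2) E (x) F), with just two
terms, and since (X+)^2 = (X-)^2 = 0 its inverse is (1 - (1-q^2) E (x) F) C^-1.  All the identities
then reduce to comparing coefficient functions monomial by monomial.  Moving a Cartan function
past X+- shifts its argument by the weight +-(2,-2); since C is a bicharacter, such a shift in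
one leg of C produces a factor (K1 K2)^-+1 in the other leg, which is exactly what exchanges
the two legs of Delta(X+-).
\<close>

lemma UNIV_mon: "(UNIV :: mon set) = {m0, mP, mM, mPM}"
  using mon.exhaust by auto

instance mon :: finite
  by standard (simp add: UNIV_mon)

lemma mons_iff [simp]: "xs \<in> mons n \<longleftrightarrow> length xs = n"
  unfolding mons_def by (auto simp: set_n_lists intro: mon.exhaust)

lemma finite_mons [simp]: "finite (mons n)"
  unfolding mons_def by simp

lemma restr_eqI:
  "(\<And>ms h. length ms = n \<Longrightarrow> length h = n \<Longrightarrow> F ms h = G ms h) \<Longrightarrow> restr n F = restr n G"
  unfolding restr_def by (auto intro!: ext)

lemma sum_list_mult_sum_list:
  "(\<Sum>x\<leftarrow>xs. f x) * (\<Sum>y\<leftarrow>ys. g y) = (\<Sum>x\<leftarrow>xs. \<Sum>y\<leftarrow>ys. f x * g y)"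
  for f g :: "_ \<Rightarrow> 'a::semiring_0"
  by (induction xs) (simp_all add: distrib_right sum_list_const_mult)

lemma sum_list_concat: "sum_list (concat xss) = (\<Sum>xs\<leftarrow>xss. sum_list xs)"
  for xss :: "'a::monoid_add list list"
  by (induction xss) simp_all

lemma sum_sum_list_swap: "(\<Sum>a\<in>A. \<Sum>x\<leftarrow>xs. f a x) = (\<Sum>x\<leftarrow>xs. \<Sum>a\<in>A. f a x)"
  by (induction xs) (simp_all add: sum.distrib)

lemma if_zero_mult_if_zero:
  "(if P then a else 0) * (if Q then b else 0) = (if P \<and> Q then a * b else (0::'a::mult_zero))"
  by simp

section \<open>Tensors as lists of terms\<close>

type_synonym tterm = "mon list \<times> (cw list \<Rightarrow> complex)"

definition tens_of_terms :: "nat \<Rightarrow> tterm list \<Rightarrow> tens" where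
  "tens_of_terms n L = restr n (\<lambda>ms h. \<Sum>(xs, f)\<leftarrow>L. if ms = xs then f h else 0)"

lemma tens_of_terms_in_Tens: "tens_of_terms n L \<in> Tens n"
  unfolding Tens_def tens_of_terms_def restr_def by (auto intro!: ext)

lemma tens_of_terms_eqI:
  assumes "\<And>ms h. length ms = n \<Longrightarrow> length h = n \<Longrightarrow>
    (\<Sum>(xs, f)\<leftarrow>L. if ms = xs then f h else 0) = (\<Sum>(xs, f)\<leftarrow>L'. if ms = xs then f h else 0)"
  shows "tens_of_terms n L = tens_of_terms n L'"
  unfolding tens_of_terms_def using assms by (rule restr_eqI)

lemma tens_of_terms_Nil: "tens_of_terms n [] = restr n (\<lambda>_ _. 0)"
  unfolding tens_of_terms_def by simp

lemma tens_of_terms_append: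
  "tens_of_terms n (L @ L') = tadd (tens_of_terms n L) (tens_of_terms n L')"
  unfolding tens_of_terms_def tadd_def restr_def by (auto intro!: ext)

lemma tens_of_terms_Cons: "tens_of_terms n (p # L) = tadd (tens_of_terms n [p]) (tens_of_terms n L)"
  using tens_of_terms_append[of n "[p]" L] by simp

lemma cart_eq_terms: "cart n \<phi> = tens_of_terms n [(replicate n m0, \<phi>)]"
  unfolding cart_def tens_of_terms_def by simp

lemma mono_eq_terms: "mono n xs = tens_of_terms n [(xs, \<lambda>_. 1)]"
  unfolding mono_def tens_of_terms_def by simp

lemma tone_eq_terms: "tone n = tens_of_terms n [(replicate n m0, \<lambda>_. 1)]"
  unfolding tone_def tens_of_terms_def by simp

lemma Tens_1_eq_terms:
  assumes "a \<in> Tens 1"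
  shows "a = tens_of_terms 1 [([m], a [m]). m \<leftarrow> [m0, mP, mM, mPM]]"
proof -
  have "a = restr 1 a"
    using assms unfolding Tens_def by simp
  also have "\<dots> = tens_of_terms 1 [([m], a [m]). m \<leftarrow> [m0, mP, mM, mPM]]"
    unfolding tens_of_terms_def
    by (rule restr_eqI) (auto simp: length_Suc_conv intro: mon.exhaust)
  finally show ?thesis .
qed

lemma tscale_tens_of_terms:
  "tscale c (tens_of_terms n L) = tens_of_terms n [(xs, \<lambda>h. c * f h). (xs, f) \<leftarrow> L]"
proof -
  have "c * (\<Sum>(xs, f)\<leftarrow>L. if ms = xs then f h else 0) =
        (\<Sum>(xs, f)\<leftarrow>[(xs, \<lambda>h. c * f h). (xs, f) \<leftarrow> L]. if ms = xs then f h else 0)" for ms h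
    by (induction L) (auto simp: distrib_left)
  then show ?thesis
    unfolding tscale_def tens_of_terms_def restr_def by (auto intro!: ext)
qed

lemma ttensor_tens_of_terms:
  assumes "\<forall>(xs, f)\<in>set L. length xs = k"
  shows "ttensor k l (tens_of_terms k L) (tens_of_terms l L') = tens_of_terms (k + l)
     [(xs @ ys, \<lambda>h. f (take k h) * g (drop k h)). (xs, f) \<leftarrow> L, (ys, g) \<leftarrow> L']"
  unfolding ttensor_def tens_of_terms_def
proof (rule restr_eqI)
  fix ms :: "mon list" and h :: "cw list"
  assume lens: "length ms = k + l" "length h = k + l"
  have split_ms: "ms = xs @ ys \<longleftrightarrow> take k ms = xs \<and> drop k ms = ys" if "length xs = k" for xs ys
    using that by (metis append_eq_conv_conj)
  have "restr k (\<lambda>ms h. \<Sum>(xs, f)\<leftarrow>L. if ms = xs then f h else 0) (take k ms) (take k h) *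
        restr l (\<lambda>ms h. \<Sum>(xs, f)\<leftarrow>L'. if ms = xs then f h else 0) (drop k ms) (drop k h) =
        (\<Sum>(xs, f)\<leftarrow>L. \<Sum>(ys, g)\<leftarrow>L'. if take k ms = xs \<and> drop k ms = ys
           then f (take k h) * g (drop k h) else 0)"
    using lens by (simp add: restr_def sum_list_mult_sum_list case_prod_beta' if_zero_mult_if_zero)
  also have "\<dots> = (\<Sum>(xs, f)\<leftarrow>L. \<Sum>(ys, g)\<leftarrow>L'. if ms = xs @ ys
           then f (take k h) * g (drop k h) else 0)"
    using assms split_ms by (intro arg_cong[where f=sum_list] map_cong refl) auto
  finally show "restr k (\<lambda>ms h. \<Sum>(xs, f)\<leftarrow>L. if ms = xs then f h else 0) (take k ms) (take k h) *
        restr l (\<lambda>ms h. \<Sum>(xs, f)\<leftarrow>L'. if ms = xs then f h else 0) (drop k ms) (drop k h) =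
     (\<Sum>(xs, f)\<leftarrow>[(xs @ ys, \<lambda>h. f (take k h) * g (drop k h)). (xs, f) \<leftarrow> L, (ys, g) \<leftarrow> L'].
        if ms = xs then f h else 0)"
    by (simp add: map_concat sum_list_concat case_prod_beta' o_def cong: if_cong)
qed

lemma leg13_tens_of_terms:
  assumes "\<forall>(xs, f)\<in>set L. length xs = 2"
  shows "leg13 (tens_of_terms 2 L) =
    tens_of_terms 3 [([xs ! 0, m0, xs ! 1], \<lambda>h. f [h ! 0, h ! 2]). (xs, f) \<leftarrow> L]"
  unfolding leg13_def tens_of_terms_def
proof (rule restr_eqI)
  fix ms :: "mon list" and h :: "cw list"
  assume "length ms = 3" "length h = 3"
  then obtain a b c where ms: "ms = [a, b, c]"
    by (auto simp: numeral_3_eq_3 length_Suc_conv)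
  have "[a, b, c] = [xs ! 0, m0, xs ! 1] \<longleftrightarrow> b = m0 \<and> [a, c] = xs" if "length xs = 2" for xs
    using that by (auto simp: numeral_2_eq_2 length_Suc_conv)
  then show "(if ms ! 1 = m0 then restr 2 (\<lambda>ms h. \<Sum>(xs, f)\<leftarrow>L. if ms = xs then f h else 0)
        [ms ! 0, ms ! 2] [h ! 0, h ! 2] else 0) =
    (\<Sum>(xs, f)\<leftarrow>[([xs ! 0, m0, xs ! 1], \<lambda>h. f [h ! 0, h ! 2]). (xs, f) \<leftarrow> L]. if ms = xs then f h else 0)"
    using assms
    by (auto simp: ms restr_def case_prod_beta' o_def intro!: arg_cong[where f=sum_list] map_cong)
qed

lemma tflip_tens_of_terms:
  assumes "\<forall>(xs, f)\<in>set L. length xs = 2"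
  shows "tflip (tens_of_terms 2 L) =
    tens_of_terms 2 [([xs ! 1, xs ! 0], \<lambda>h. f [h ! 1, h ! 0]). (xs, f) \<leftarrow> L]"
  unfolding tflip_def tens_of_terms_def
proof (rule restr_eqI)
  fix ms :: "mon list" and h :: "cw list"
  assume "length ms = 2" "length h = 2"
  then obtain a b where ms: "ms = [a, b]"
    by (auto simp: numeral_2_eq_2 length_Suc_conv)
  have "[a, b] = [xs ! 1, xs ! 0] \<longleftrightarrow> [b, a] = xs" if "length xs = 2" for xs
    using that by (auto simp: numeral_2_eq_2 length_Suc_conv)
  then show "restr 2 (\<lambda>ms h. \<Sum>(xs, f)\<leftarrow>L. if ms = xs then f h else 0) [ms ! 1, ms ! 0] [h ! 1, h ! 0] =
    (\<Sum>(xs, f)\<leftarrow>[([xs ! 1, xs ! 0], \<lambda>h. f [h ! 1, h ! 0]). (xs, f) \<leftarrow> L]. if ms = xs then f h else 0)"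
    using assms
    by (auto simp: ms restr_def case_prod_beta' o_def intro!: arg_cong[where f=sum_list] map_cong)
qed

abbreviation wt_shift :: "cw list \<Rightarrow> mon list \<Rightarrow> cw list" where
  "wt_shift h xs \<equiv> map2 (\<lambda>hi x. psub hi (wt x)) h xs"

fun mprods :: "complex \<Rightarrow> mon list \<Rightarrow> mon list \<Rightarrow> tterm list" where
  "mprods hb (x # xs) (y # ys) =
     [(z # zs, \<lambda>h. \<phi> (hd h) * \<psi> (tl h)). (z, \<phi>) \<leftarrow> mprod hb x y, (zs, \<psi>) \<leftarrow> mprods hb xs ys]"
| "mprods hb [] [] = [([], \<lambda>h. 1)]"
| "mprods hb _ _ = []"

lemma length_mprods: "(zs, \<phi>) \<in> set (mprods hb xs ys) \<Longrightarrow> length zs = length xs"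
  by (induction hb xs ys arbitrary: zs \<phi> rule: mprods.induct) auto

lemma prod_sc_eq_mprods:
  "length ys = length xs \<Longrightarrow> length ms = length xs \<Longrightarrow> length h = length xs \<Longrightarrow>
   (\<Prod>i<length xs. sc hb (xs ! i) (ys ! i) (ms ! i) (h ! i)) =
   (\<Sum>(zs, \<phi>)\<leftarrow>mprods hb xs ys. if zs = ms then \<phi> h else 0)"
proof (induction xs arbitrary: ys ms h)
  case Nil
  then show ?case by simp
next
  case (Cons x xs)
  then obtain y ys' m ms' h0 h' where
    eqs: "ys = y # ys'" "ms = m # ms'" "h = h0 # h'" and
    lens: "length ys' = length xs" "length ms' = length xs" "length h' = length xs"
    by (cases ys; cases ms; cases h) auto
  have "(\<Prod>i<length (x # xs). sc hb ((x # xs) ! i) (ys ! i) (ms ! i) (h ! i)) =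
     sc hb x y m h0 * (\<Prod>i<length xs. sc hb (xs ! i) (ys' ! i) (ms' ! i) (h' ! i))"
    unfolding eqs by (simp add: prod.lessThan_Suc_shift del: prod.lessThan_Suc)
  also have "\<dots> = sc hb x y m h0 * (\<Sum>(zs, \<phi>)\<leftarrow>mprods hb xs ys'. if zs = ms' then \<phi> h' else 0)"
    using Cons.IH[OF lens] by simp
  also have "\<dots> = (\<Sum>(zs, \<phi>)\<leftarrow>mprods hb (x # xs) ys. if zs = ms then \<phi> h else 0)"
    unfolding eqs sc_def
    by (simp add: sum_list_mult_sum_list map_concat sum_list_concat if_zero_mult_if_zero
        case_prod_beta o_def cong: if_cong)
  finally show ?case .
qed

lemma tmul_single_terms:
  assumes "length xs = n" "length ys = n"
  shows "tmul hb n (tens_of_terms n [(xs, f)]) (tens_of_terms n [(ys, g)]) =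
    tens_of_terms n [(zs, \<lambda>h. f h * g (wt_shift h xs) * \<phi> h). (zs, \<phi>) \<leftarrow> mprods hb xs ys]"
  unfolding tmul_def tens_of_terms_def[of n "map _ _"]
proof (rule restr_eqI)
  fix ms :: "mon list" and h :: "cw list"
  assume lens: "length ms = n" "length h = n"
  have sum_if: "(\<Sum>b\<in>B. if P then u b else 0) = (if P then \<Sum>b\<in>B. u b else 0)"
    for P B and u :: "mon list \<Rightarrow> complex"
    by simp
  have "(\<Sum>a\<in>mons n. \<Sum>b\<in>mons n.
          tens_of_terms n [(xs, f)] a h * tens_of_terms n [(ys, g)] b (wt_shift h a) *
          (\<Prod>i<n. sc hb (a ! i) (b ! i) (ms ! i) (h ! i)))
      = f h * g (wt_shift h xs) * (\<Prod>i<n. sc hb (xs ! i) (ys ! i) (ms ! i) (h ! i))"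
    using assms lens
    by (simp add: tens_of_terms_def restr_def sum_if if_distrib[of "\<lambda>x. x * _"]
        if_distrib[of "times _"] cong: if_cong)
  also have "\<dots> = (\<Sum>(zs, \<phi>)\<leftarrow>[(zs, \<lambda>h. f h * g (wt_shift h xs) * \<phi> h). (zs, \<phi>) \<leftarrow> mprods hb xs ys].
       if ms = zs then \<phi> h else 0)"
    using prod_sc_eq_mprods[of ys xs ms h hb] assms lens
    by (simp add: sum_list_const_mult[symmetric] case_prod_beta o_def if_distrib[of "times _"]
        eq_commute[of ms] cong: if_cong)
  finally show "(\<Sum>a\<in>mons n. \<Sum>b\<in>mons n.
          tens_of_terms n [(xs, f)] a h * tens_of_terms n [(ys, g)] b (wt_shift h a) *
          (\<Prod>i<n. sc hb (a ! i) (b ! i) (ms ! i) (h ! i))) = \<dots>" .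
qed

lemma tmul_zero_left: "tmul hb n (restr n (\<lambda>_ _. 0)) G = restr n (\<lambda>_ _. 0)"
  unfolding tmul_def restr_def by (auto intro!: ext)

lemma tmul_zero_right: "tmul hb n F (restr n (\<lambda>_ _. 0)) = restr n (\<lambda>_ _. 0)"
  unfolding tmul_def restr_def by (auto intro!: ext)

lemma tmul_tadd_left: "tmul hb n (tadd F G) H = tadd (tmul hb n F H) (tmul hb n G H)"
  unfolding tmul_def tadd_def restr_def by (auto intro!: ext simp: sum.distrib distrib_right)

lemma tmul_tadd_right: "tmul hb n F (tadd G H) = tadd (tmul hb n F G) (tmul hb n F H)"
  unfolding tmul_def tadd_def restr_def
  by (auto intro!: ext simp: sum.distrib distrib_left distrib_right)

definition terms_mul :: "complex \<Rightarrow> tterm list \<Rightarrow> tterm list \<Rightarrow> tterm list" where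
  "terms_mul hb L1 L2 =
     [(zs, \<lambda>h. f h * g (wt_shift h xs) * \<phi> h).
        (xs, f) \<leftarrow> L1, (ys, g) \<leftarrow> L2, (zs, \<phi>) \<leftarrow> mprods hb xs ys]"

lemma length_terms_mul:
  "\<forall>(xs, f)\<in>set L1. length xs = n \<Longrightarrow> \<forall>(zs, \<phi>)\<in>set (terms_mul hb L1 L2). length zs = n"
  by (auto simp: terms_mul_def dest!: length_mprods)

lemma tmul_tens_of_terms:
  assumes "\<forall>(xs, f)\<in>set L1. length xs = n" "\<forall>(ys, g)\<in>set L2. length ys = n"
  shows "tmul hb n (tens_of_terms n L1) (tens_of_terms n L2) = tens_of_terms n (terms_mul hb L1 L2)"
  using assms(1)
proof (induction L1)
  case Nil
  then show ?case by (simp add: terms_mul_def tens_of_terms_Nil tmul_zero_left)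
next
  case (Cons p L1)
  obtain xs f where p: "p = (xs, f)" by (cases p)
  with Cons.prems have len_xs: "length xs = n" by simp
  have "tmul hb n (tens_of_terms n [(xs, f)]) (tens_of_terms n L2) =
      tens_of_terms n (terms_mul hb [(xs, f)] L2)"
    using assms(2)
  proof (induction L2)
    case Nil
    then show ?case by (simp add: terms_mul_def tens_of_terms_Nil tmul_zero_right)
  next
    case (Cons q L2)
    obtain ys g where q: "q = (ys, g)" by (cases q)
    show ?case
      using Cons len_xs q
      by (simp add: tens_of_terms_Cons[of n "(ys, g)" L2] tmul_tadd_right tmul_single_terms
          terms_mul_def tens_of_terms_append)
  qed
  then show ?case
    using Cons p
    by (simp add: tens_of_terms_Cons[of n "(xs, f)" L1] tmul_tadd_left terms_mul_def tens_of_terms_append)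
qed

definition DP_terms :: "complex \<Rightarrow> tterm list" where
  "DP_terms hb = [([mP, m0], \<lambda>h. K1 hb (h ! 1)), ([m0, mP], \<lambda>h. inverse (K2 hb (h ! 0)))]"

definition DM_terms :: "complex \<Rightarrow> tterm list" where
  "DM_terms hb = [([mM, m0], \<lambda>h. K2 hb (h ! 1)), ([m0, mM], \<lambda>h. inverse (K1 hb (h ! 0)))]"

fun Dmon_terms :: "complex \<Rightarrow> mon \<Rightarrow> tterm list" where
  "Dmon_terms hb m0 = [([m0, m0], \<lambda>_. 1)]"
| "Dmon_terms hb mP = DP_terms hb"
| "Dmon_terms hb mM = DM_terms hb"
| "Dmon_terms hb mPM = terms_mul hb (DP_terms hb) (DM_terms hb)"

lemma length_Dmon_terms: "(ys, g) \<in> set (Dmon_terms hb m) \<Longrightarrow> length ys = 2"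
  by (cases m) (auto simp: DP_terms_def DM_terms_def terms_mul_def)

lemma Dmon_eq_terms: "Dmon hb m = tens_of_terms 2 (Dmon_terms hb m)"
proof -
  have "DP hb = tens_of_terms 2 (DP_terms hb)" "DM hb = tens_of_terms 2 (DM_terms hb)"
    unfolding DP_def DM_def cart_eq_terms mono_eq_terms
    by (simp_all add: numeral_2_eq_2 tmul_tens_of_terms terms_mul_def tens_of_terms_append[symmetric]
        DP_terms_def DM_terms_def)
  then show ?thesis
    by (cases m) (simp_all add: tone_eq_terms numeral_2_eq_2 tmul_tens_of_terms DP_terms_def DM_terms_def)
qed

lemma insert_at_eq_iff:
  assumes "length ms = Suc n" "length xs = n" "k < n"
  shows "take k ms @ m # drop (Suc (Suc k)) ms = xs \<longleftrightarrow>
    m = xs ! k \<and> take k ms = take k xs \<and> drop (Suc (Suc k)) ms = drop (Suc k) xs"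
proof -
  have "xs = take k xs @ xs ! k # drop (Suc k) xs"
    using assms by (simp add: id_take_nth_drop)
  moreover have "length (take k ms) = length (take k xs)"
    using assms by simp
  ultimately show ?thesis
    by (metis append_eq_append_conv list.inject)
qed

lemma replace_at_eq_iff:
  assumes "length ms = Suc n" "length xs = n" "k < n" "length ys = 2"
  shows "ms = take k xs @ ys @ drop (Suc k) xs \<longleftrightarrow>
    take k ms @ xs ! k # drop (Suc (Suc k)) ms = xs \<and> [ms ! k, ms ! Suc k] = ys"
proof -
  have "ms = take k ms @ [ms ! k, ms ! Suc k] @ drop (Suc (Suc k)) ms"
    using assms by (simp add: Cons_nth_drop_Suc)
  moreover have "length (take k ms) = length (take k xs)" "length [ms ! k, ms ! Suc k] = length ys"
    using assms by simp_all
  ultimately show ?thesis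
    using insert_at_eq_iff[OF assms(1-3)] by (metis append_eq_append_conv)
qed

lemma sum_insert_at_Dmon:
  assumes len: "length ms = Suc n" "length xs = n" "k < n"
  shows "(\<Sum>m\<in>UNIV. (if take k ms @ m # drop (Suc (Suc k)) ms = xs then c else 0) *
      Dmon hb m [ms ! k, ms ! Suc k] [u, v]) =
    (\<Sum>(ys, g)\<leftarrow>Dmon_terms hb (xs ! k). if ms = take k xs @ ys @ drop (Suc k) xs then c * g [u, v] else 0)"
proof -
  define ms' where "ms' m = take k ms @ m # drop (Suc (Suc k)) ms" for m
  have ms'_eq_iff: "ms' m = xs \<longleftrightarrow> m = xs ! k \<and> ms' (xs ! k) = xs" for m
    using insert_at_eq_iff[OF len] by (auto simp: ms'_def)
  have "(\<Sum>m\<in>UNIV. (if ms' m = xs then c else 0) * Dmon hb m [ms ! k, ms ! Suc k] [u, v]) =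
      (\<Sum>m\<in>UNIV. if m = xs ! k
         then (if ms' (xs ! k) = xs then c * Dmon hb m [ms ! k, ms ! Suc k] [u, v] else 0) else 0)"
    by (rule sum.cong[OF refl], subst ms'_eq_iff) simp
  also have "\<dots> = (if ms' (xs ! k) = xs then c * Dmon hb (xs ! k) [ms ! k, ms ! Suc k] [u, v] else 0)"
    by simp
  also have "\<dots> = (\<Sum>(ys, g)\<leftarrow>Dmon_terms hb (xs ! k).
      if ms' (xs ! k) = xs \<and> [ms ! k, ms ! Suc k] = ys then c * g [u, v] else 0)"
    by (simp add: Dmon_eq_terms tens_of_terms_def restr_def sum_list_const_mult[symmetric]
        case_prod_beta' if_distrib[of "times _"] cong: if_cong)
  also have "\<dots> = (\<Sum>(ys, g)\<leftarrow>Dmon_terms hb (xs ! k).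
      if ms = take k xs @ ys @ drop (Suc k) xs then c * g [u, v] else 0)"
    using replace_at_eq_iff[OF len length_Dmon_terms]
    by (intro arg_cong[where f=sum_list] map_cong refl) (auto simp: ms'_def)
  finally show ?thesis
    by (simp only: ms'_def)
qed

definition Dat_terms :: "complex \<Rightarrow> nat \<Rightarrow> tterm list \<Rightarrow> tterm list" where
  "Dat_terms hb k L =
     [(take k xs @ ys @ drop (Suc k) xs,
       \<lambda>h. f (take k h @ padd (h ! k) (h ! Suc k) # drop (Suc (Suc k)) h) * g [h ! k, h ! Suc k]).
      (xs, f) \<leftarrow> L, (ys, g) \<leftarrow> Dmon_terms hb (xs ! k)]"

lemma Dat_tens_of_terms:
  assumes "k < n" and lens: "\<forall>(xs, f)\<in>set L. length xs = n"
  shows "Dat hb n k (tens_of_terms n L) = tens_of_terms (n + 1) (Dat_terms hb k L)"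
  unfolding Dat_def tens_of_terms_def[of "n + 1"]
proof (rule restr_eqI)
  fix ms :: "mon list" and h :: "cw list"
  assume "length ms = n + 1" "length h = n + 1"
  then have len: "length ms = Suc n" "length h = Suc n" by simp_all
  define ms' where "ms' m = take k ms @ m # drop (Suc (Suc k)) ms" for m
  define h' where "h' = take k h @ padd (h ! k) (h ! Suc k) # drop (Suc (Suc k)) h"
  have tens_ms': "tens_of_terms n L (ms' m) h' = (\<Sum>(xs, f)\<leftarrow>L. if ms' m = xs then f h' else 0)" for m
    unfolding tens_of_terms_def restr_def ms'_def h'_def using assms len by simp
  have "(\<Sum>m\<in>UNIV. tens_of_terms n L (ms' m) h' * Dmon hb m [ms ! k, ms ! Suc k] [h ! k, h ! Suc k]) =
      (\<Sum>(xs, f)\<leftarrow>L. \<Sum>m\<in>UNIV.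
         (if ms' m = xs then f h' else 0) * Dmon hb m [ms ! k, ms ! Suc k] [h ! k, h ! Suc k])"
    by (simp add: tens_ms' sum_list_mult_const[symmetric] sum_sum_list_swap case_prod_beta')
  also have "\<dots> = (\<Sum>(xs, f)\<leftarrow>L. \<Sum>(ys, g)\<leftarrow>Dmon_terms hb (xs ! k).
      if ms = take k xs @ ys @ drop (Suc k) xs then f h' * g [h ! k, h ! Suc k] else 0)"
  proof (intro arg_cong[where f=sum_list] map_cong refl, clarify)
    fix xs f assume "(xs, f) \<in> set L"
    with lens show "(\<Sum>m\<in>UNIV.
        (if ms' m = xs then f h' else 0) * Dmon hb m [ms ! k, ms ! Suc k] [h ! k, h ! Suc k]) =
      (\<Sum>(ys, g)\<leftarrow>Dmon_terms hb (xs ! k).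
        if ms = take k xs @ ys @ drop (Suc k) xs then f h' * g [h ! k, h ! Suc k] else 0)"
      unfolding ms'_def by (intro sum_insert_at_Dmon[OF len(1) _ assms(1)]) auto
  qed
  also have "\<dots> = (\<Sum>(zs, \<phi>)\<leftarrow>Dat_terms hb k L. if ms = zs then \<phi> h else 0)"
    by (simp add: Dat_terms_def map_concat sum_list_concat o_def case_prod_beta' h'_def cong: if_cong)
  finally show "(\<Sum>m\<in>{m0, mP, mM, mPM}. tens_of_terms n L (take k ms @ m # drop (k + 2) ms)
        (take k h @ padd (h ! k) (h ! (k + 1)) # drop (k + 2) h) *
      Dmon hb m [ms ! k, ms ! (k + 1)] [h ! k, h ! (k + 1)]) = \<dots>"
    by (simp add: UNIV_mon ms'_def h'_def)
qed

lemma Delta_eq_terms: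
  assumes "a \<in> Tens 1"
  shows "Delta hb a = tens_of_terms 2 (Dat_terms hb 0 [([m], a [m]). m \<leftarrow> [m0, mP, mM, mPM]])"
proof -
  have "Delta hb a = Dat hb 1 0 (tens_of_terms 1 [([m], a [m]). m \<leftarrow> [m0, mP, mM, mPM]])"
    unfolding Delta_def by (subst Tens_1_eq_terms[OF assms]) (rule refl)
  also have "\<dots> = tens_of_terms (1 + 1) (Dat_terms hb 0 [([m], a [m]). m \<leftarrow> [m0, mP, mM, mPM]])"
    by (rule Dat_tens_of_terms) auto
  finally show ?thesis
    by (simp only: one_add_one)
qed

section \<open>Weight shifts of the Cartan functions\<close>

lemma padd_psub_psub [simp]:
  "padd (psub x (2, -2)) (psub y (-2, 2)) = padd x y"
  "padd (psub x (-2, 2)) (psub y (2, -2)) = padd x y"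
  unfolding padd_def psub_def by simp_all

lemma psub_zero [simp]: "psub h (0, 0) = h"
  by (simp add: psub_def)

lemma K1_nonzero [simp]: "K1 hb x \<noteq> 0"
  unfolding K1_def by simp

lemma K2_nonzero [simp]: "K2 hb x \<noteq> 0"
  unfolding K2_def by simp

lemma K1_padd [simp]: "K1 hb (padd x y) = K1 hb x * K1 hb y"
  unfolding K1_def padd_def by (simp add: mult_exp_exp algebra_simps add_divide_distrib)

lemma K2_padd [simp]: "K2 hb (padd x y) = K2 hb x * K2 hb y"
  unfolding K2_def padd_def by (simp add: mult_exp_exp algebra_simps add_divide_distrib)

lemma K1_psub [simp]:
  "K1 hb (psub h (2, -2)) = K1 hb h * inverse (exp hb)"
  "K1 hb (psub h (-2, 2)) = K1 hb h * exp hb"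
  unfolding K1_def psub_def
  by (simp_all add: exp_minus[symmetric] mult_exp_exp algebra_simps diff_divide_distrib add_divide_distrib)

lemma K2_psub_plus [simp]: "K2 hb (psub h (2, -2)) = - (K2 hb h * exp hb)"
proof -
  have "K2 hb (psub h (2, -2)) =
      exp (\<i> * of_real pi * snd h / 2 + \<i> * of_real pi) * exp (hb * snd h / 2 + hb)"
    unfolding K2_def psub_def
    by (intro arg_cong2[where f="(*)"] arg_cong[where f=exp]) (simp_all add: algebra_simps add_divide_distrib)
  then show ?thesis
    by (simp only: exp_add exp_pi_i' K2_def) simp
qed

lemma K2_psub_minus [simp]: "K2 hb (psub h (-2, 2)) = - (K2 hb h * inverse (exp hb))"
proof -
  have "K2 hb (psub h (-2, 2)) =
      exp (\<i> * of_real pi * snd h / 2 + - (\<i> * of_real pi)) * exp (hb * snd h / 2 + - hb)"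
    unfolding K2_def psub_def
    by (intro arg_cong2[where f="(*)"] arg_cong[where f=exp]) (simp_all add: algebra_simps diff_divide_distrib)
  then show ?thesis
    by (simp only: exp_add exp_minus exp_pi_i' K2_def) simp
qed

definition cartan_R :: "complex \<Rightarrow> cw \<Rightarrow> cw \<Rightarrow> complex" where
  "cartan_R hb x y = exp (- \<i> * of_real pi / 4 * (snd x * snd y)) *
     exp (hb * ((fst x * fst y - snd x * snd y) / 4))"

lemma cartan_R_nonzero [simp]: "cartan_R hb x y \<noteq> 0"
  unfolding cartan_R_def by simp

lemma cartan_R_padd [simp]:
  "cartan_R hb (padd x y) z = cartan_R hb x z * cartan_R hb y z"
  "cartan_R hb x (padd y z) = cartan_R hb x y * cartan_R hb x z"
  unfolding cartan_R_def padd_def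
  by (simp_all add: mult_exp_exp algebra_simps diff_divide_distrib add_divide_distrib)

lemma cartan_R_psub [simp]:
  "cartan_R hb (psub x (2, -2)) y = cartan_R hb x y * inverse (K1 hb y * K2 hb y)"
  "cartan_R hb (psub x (-2, 2)) y = cartan_R hb x y * (K1 hb y * K2 hb y)"
  "cartan_R hb x (psub y (2, -2)) = cartan_R hb x y * inverse (K1 hb x * K2 hb x)"
  "cartan_R hb x (psub y (-2, 2)) = cartan_R hb x y * (K1 hb x * K2 hb x)"
  unfolding cartan_R_def K1_def K2_def psub_def
  by (simp_all add: exp_minus[symmetric] mult_exp_exp algebra_simps diff_divide_distrib add_divide_distrib)

text \<open>Kept as a defined constant so that \<open>field_simps\<close> treats \<open>1 - q\<^sup>2\<close> as an atom.\<close>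
definition one_minus_q2 :: "complex \<Rightarrow> complex" where
  "one_minus_q2 hb = 1 - exp hb ^ 2"

lemma one_minus_q2_nonzero: "exp hb ^ 2 \<noteq> 1 \<Longrightarrow> one_minus_q2 hb \<noteq> 0"
  unfolding one_minus_q2_def by simp

lemma cX_eq: "cX hb h = - (exp hb * (K1 hb h * K2 hb h - inverse (K1 hb h * K2 hb h))) / one_minus_q2 hb"
proof -
  have "exp hb - inverse (exp hb) = - one_minus_q2 hb / exp hb"
    unfolding one_minus_q2_def by (simp add: field_simps power2_eq_square)
  then show ?thesis
    unfolding cX_def by simp
qed

section \<open>The R-matrix\<close>

definition R_terms :: "complex \<Rightarrow> tterm list" where
  "R_terms hb =
     [([m0, m0], \<lambda>h. cartan_R hb (h ! 0) (h ! 1)),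
      ([mP, mM], \<lambda>h. cartan_R hb (h ! 0) (h ! 1) * one_minus_q2 hb * (K2 hb (h ! 0) * inverse (K2 hb (h ! 1))))]"

text \<open>In \<open>R\<^sup>-\<^sup>1 = (1 - (1-q\<^sup>2) E \<otimes> F) C\<^sup>-\<^sup>1\<close> the factor \<open>C\<^sup>-\<^sup>1\<close> stands to the right of
  \<open>X+ \<otimes> X-\<close>, hence is evaluated at the weight-shifted eigenvalues.\<close>
definition R_inv_terms :: "complex \<Rightarrow> tterm list" where
  "R_inv_terms hb =
     [([m0, m0], \<lambda>h. inverse (cartan_R hb (h ! 0) (h ! 1))),
      ([mP, mM], \<lambda>h. - one_minus_q2 hb * (K2 hb (h ! 0) * inverse (K2 hb (h ! 1))) *
         inverse (cartan_R hb (psub (h ! 0) (wt mP)) (psub (h ! 1) (wt mM))))]"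

lemma length_R_terms: "\<forall>(xs, f)\<in>set (R_terms hb). length xs = 2"
  by (simp add: R_terms_def)

lemma length_R_inv_terms: "\<forall>(xs, f)\<in>set (R_inv_terms hb). length xs = 2"
  by (simp add: R_inv_terms_def)

lemma Rmat_eq_terms: "Rmat hb = tens_of_terms 2 (R_terms hb)"
  unfolding Rmat_def Egen_def Fgen_def cart_eq_terms mono_eq_terms tone_eq_terms
  by (simp add: numeral_2_eq_2 terms_mul_def tmul_tens_of_terms tens_of_terms_append[symmetric]
      tscale_tens_of_terms ttensor_tens_of_terms, rule tens_of_terms_eqI)
    (clarsimp simp: length_Suc_conv R_terms_def one_minus_q2_def power2_eq_square cartan_R_def)

lemma tmul_R_R_inv: "tmul hb 2 (Rmat hb) (tens_of_terms 2 (R_inv_terms hb)) = tone 2"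
  unfolding Rmat_eq_terms tone_eq_terms
  by (simp add: numeral_2_eq_2 terms_mul_def tmul_tens_of_terms R_terms_def R_inv_terms_def,
      rule tens_of_terms_eqI) (clarsimp simp: length_Suc_conv)

lemma tmul_R_inv_R: "tmul hb 2 (tens_of_terms 2 (R_inv_terms hb)) (Rmat hb) = tone 2"
  unfolding Rmat_eq_terms tone_eq_terms
  by (simp add: numeral_2_eq_2 terms_mul_def tmul_tens_of_terms R_terms_def R_inv_terms_def,
      rule tens_of_terms_eqI) (clarsimp simp: length_Suc_conv field_simps)

lemma tflip_Delta_eq_conj_R:
  assumes "exp hb ^ 2 \<noteq> 1" "a \<in> Tens 1"
  shows "tflip (Delta hb a) = tmul hb 2 (tmul hb 2 (Rmat hb) (Delta hb a)) (tens_of_terms 2 (R_inv_terms hb))"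
proof -
  define D where "D = Dat_terms hb 0 [([m], a [m]). m \<leftarrow> [m0, mP, mM, mPM]]"
  have len_D: "\<forall>(xs, f)\<in>set D. length xs = 2"
    by (simp add: D_def Dat_terms_def DP_terms_def DM_terms_def terms_mul_def)
  have "tflip (Delta hb a) = tens_of_terms 2 [([xs ! 1, xs ! 0], \<lambda>h. f [h ! 1, h ! 0]). (xs, f) \<leftarrow> D]"
    using len_D by (simp add: Delta_eq_terms[OF assms(2)] D_def tflip_tens_of_terms)
  also have "\<dots> = tens_of_terms 2 (terms_mul hb (terms_mul hb (R_terms hb) D) (R_inv_terms hb))"
  proof (simp add: D_def terms_mul_def R_terms_def R_inv_terms_def Dat_terms_def DP_terms_def DM_terms_def
      cX_eq, rule tens_of_terms_eqI, goal_cases)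
    case (1 ms h)
    then obtain x y h0 h1 where "ms = [x, y]" "h = [h0, h1]"
      by (auto simp: numeral_2_eq_2 length_Suc_conv)
    then show ?case
      using one_minus_q2_nonzero[OF assms(1)]
      by (cases x; cases y) (simp_all add: field_simps, simp_all add: padd_def add.commute)
  qed
  also have "\<dots> = tmul hb 2 (tmul hb 2 (Rmat hb) (Delta hb a)) (tens_of_terms 2 (R_inv_terms hb))"
    unfolding Delta_eq_terms[OF assms(2)] D_def[symmetric] Rmat_eq_terms
    using len_D length_R_terms length_R_inv_terms length_terms_mul[OF length_R_terms]
    by (simp add: tmul_tens_of_terms)
  finally show ?thesis .
qed

lemma Dat_0_Rmat_eq_leg13_leg23: "Dat hb 2 0 (Rmat hb) = tmul hb 3 (leg13 (Rmat hb)) (leg23 (Rmat hb))"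
proof -
  have "Dat hb 2 0 (Rmat hb) = tens_of_terms 3 (Dat_terms hb 0 (R_terms hb))"
    using Dat_tens_of_terms[OF _ length_R_terms, of 0 hb] by (simp add: Rmat_eq_terms)
  also have "\<dots> = tmul hb 3 (leg13 (Rmat hb)) (leg23 (Rmat hb))"
    unfolding Rmat_eq_terms leg23_def tone_eq_terms
    by (simp add: leg13_tens_of_terms ttensor_tens_of_terms length_R_terms R_terms_def numeral_3_eq_3
        tmul_tens_of_terms, rule tens_of_terms_eqI)
      (clarsimp simp: length_Suc_conv Dat_terms_def terms_mul_def DP_terms_def DM_terms_def)
  finally show ?thesis .
qed

lemma Dat_1_Rmat_eq_leg13_leg12: "Dat hb 2 1 (Rmat hb) = tmul hb 3 (leg13 (Rmat hb)) (leg12 (Rmat hb))"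
proof -
  have "Dat hb 2 1 (Rmat hb) = tens_of_terms 3 (Dat_terms hb 1 (R_terms hb))"
    using Dat_tens_of_terms[OF _ length_R_terms, of 1 hb] by (simp add: Rmat_eq_terms)
  also have "\<dots> = tmul hb 3 (leg13 (Rmat hb)) (leg12 (Rmat hb))"
    unfolding Rmat_eq_terms leg12_def tone_eq_terms
    by (simp add: leg13_tens_of_terms ttensor_tens_of_terms length_R_terms R_terms_def numeral_3_eq_3
        tmul_tens_of_terms, rule tens_of_terms_eqI)
      (clarsimp simp: length_Suc_conv Dat_terms_def terms_mul_def DP_terms_def DM_terms_def)
  finally show ?thesis .
qed

theorem mainTheorem1:
  fixes hb :: complex
  assumes "exp hb ^ 2 \<noteq> 1"
  shows "\<exists>Rinv \<in> Tens 2.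
           tmul hb 2 (Rmat hb) Rinv = tone 2 \<and> tmul hb 2 Rinv (Rmat hb) = tone 2 \<and>
           (\<forall>a \<in> Tens 1. tflip (Delta hb a) = tmul hb 2 (tmul hb 2 (Rmat hb) (Delta hb a)) Rinv) \<and>
           Dat hb 2 0 (Rmat hb) = tmul hb 3 (leg13 (Rmat hb)) (leg23 (Rmat hb)) \<and>
           Dat hb 2 1 (Rmat hb) = tmul hb 3 (leg13 (Rmat hb)) (leg12 (Rmat hb))"
  using tens_of_terms_in_Tens tmul_R_R_inv tmul_R_inv_R tflip_Delta_eq_conj_R[OF assms] Dat_0_Rmat_eq_leg13_leg23
      Dat_1_Rmat_eq_leg13_leg12 by blast

end
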